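(* Let $\beta>0$ and $V\in\mathbb R^{d\times d}$ be real symmetric with orthonormal eigenbasis $(e_k)$ and eigenvalues $(\lambda_k)$. Consider, for $x_i(t)\in\mathbb S^{d-1}$, $i\in[n]$, the system \[ \dot x_i=P^\perp_{x_i}\Big(\frac1{Z_i}\sum_{j=1}^n e^{\beta\langle x_i,Vx_j\rangle}Vx_j\Big),\qquad Z_i=\sum_{k=1}^n e^{\beta\langle x_i,Vx_k\rangle},\qquad P^\perp_xy=y-\langle x,y\rangle x. \] Let $s_1,\dots,s_n\in\{-1,1\}$ with $|\{i:s_i=1\}|=|\{i:s_i=-1\}|$, and suppose $x_i(0)=s_iu_0$ for all $i$, for some $u_0\in\mathbb S^{d-1}$. Then there exists $u(t)\in\mathbb S^{d-1}$ with $x_i(t)=s_iu(t)$ for all $t\ge0$ and $i\in[n]$ (i.e. the balanced bipolar manifold $\{X: \exists u\in\mathbb S^{d-1},\ x_i=s_iu\ \forall i\}$, with balanced signs, is invariant), and writing $u(t)=\sum_k u_k(t)e_k$ and $M(t)=\sum_{l=1}^d\lambda_lu_l(t)^2$, one has \[ \dot u_k=u_k\tanh(\beta M)(\lambda_k-M),\qquad k\in[d],\ t\ge0. \] *)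

theory Defs
  imports "HOL-Analysis.Analysis"
begin

definition Pperp :: "real^'d \<Rightarrow> real^'d \<Rightarrow> real^'d" where
  "Pperp x y = y - (x \<bullet> y) *\<^sub>R x"

definition attnZ :: "real \<Rightarrow> real^'d^'d \<Rightarrow> ('n::finite \<Rightarrow> real^'d) \<Rightarrow> 'n \<Rightarrow> real" where
  "attnZ \<beta> V X i = (\<Sum>k\<in>UNIV. exp (\<beta> * (X i \<bullet> (V *v X k))))"

definition attnField :: "real \<Rightarrow> real^'d^'d \<Rightarrow> ('n::finite \<Rightarrow> real^'d) \<Rightarrow> 'n \<Rightarrow> real^'d" where
  "attnField \<beta> V X i =
     Pperp (X i) ((1 / attnZ \<beta> V X i) *\<^sub>R
        (\<Sum>j\<in>UNIV. exp (\<beta> * (X i \<bullet> (V *v X j))) *\<^sub>R (V *v X j)))"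

end

theory Submission
  imports Defs
begin

text \<open>
  The attention dynamics is equivariant under relabellings of the particles and under the
  antipodal map of the sphere, and its vector field is Lipschitz on the product of spheres, so
  solutions are unique and every such symmetry of the initial datum persists for all time. For
  balanced signs some relabelling exchanges the two sign classes; composed with the antipodal map
  it fixes the bipolar datum \<open>x\<^sub>i(0) = s\<^sub>i u\<^sub>0\<close>, and so do relabellings inside a sign class.
  Hence \<open>x\<^sub>i(t) = s\<^sub>i u(t)\<close>. On a balanced bipolar configuration the two sign classes contribute
  equally many terms \<open>exp(\<beta>M)\<close> and \<open>exp(-\<beta>M)\<close> to \<open>Z\<close>, with \<open>M = \<langle>u, Vu\<rangle>\<close>, and the same weights with
  opposite signs in front of \<open>Vu\<close> to the numerator, so the field at a positive particle is
  \<open>P\<^sup>\<bottom>\<^sub>u(tanh(\<beta>M) Vu) = tanh(\<beta>M)(Vu - Mu)\<close>; its coordinates in the eigenbasis are the stated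
  equations.
\<close>

section \<open>Bounded Lipschitz maps of configurations\<close>

definition l1_dist :: "('n::finite \<Rightarrow> 'a::real_normed_vector) \<Rightarrow> ('n \<Rightarrow> 'a) \<Rightarrow> real" where
  "l1_dist X Y = (\<Sum>j\<in>UNIV. norm (X j - Y j))"

definition bounded_lipschitz_on ::
    "('n::finite \<Rightarrow> 'a::real_normed_vector) set \<Rightarrow> (('n \<Rightarrow> 'a) \<Rightarrow> 'b::real_normed_vector) \<Rightarrow> bool" where
  "bounded_lipschitz_on K f \<longleftrightarrow>
     (\<exists>B. \<forall>X\<in>K. norm (f X) \<le> B) \<and> (\<exists>L. \<forall>X\<in>K. \<forall>Y\<in>K. norm (f X - f Y) \<le> L * l1_dist X Y)"

lemma l1_dist_nonneg: "l1_dist X Y \<ge> 0"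
  unfolding l1_dist_def by (simp add: sum_nonneg)

lemma norm_diff_le_l1_dist: "norm (X j - Y j) \<le> l1_dist X Y"
  unfolding l1_dist_def by (rule member_le_sum) auto

lemma bounded_lipschitz_onI:
  assumes "\<And>X. X \<in> K \<Longrightarrow> norm (f X) \<le> B"
    and "\<And>X Y. X \<in> K \<Longrightarrow> Y \<in> K \<Longrightarrow> norm (f X - f Y) \<le> L * l1_dist X Y"
  shows "bounded_lipschitz_on K f"
  using assms unfolding bounded_lipschitz_on_def by blast

lemma bounded_lipschitz_on_const: "bounded_lipschitz_on K (\<lambda>X. c)"
  by (rule bounded_lipschitz_onI[where L = 0]) (auto simp: l1_dist_nonneg)

lemma bounded_lipschitz_on_component:
  assumes "\<And>X. X \<in> K \<Longrightarrow> norm (X j) \<le> B"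
  shows "bounded_lipschitz_on K (\<lambda>X. X j)"
  by (rule bounded_lipschitz_onI[where L = 1]) (use assms norm_diff_le_l1_dist in auto)

lemma bounded_lipschitz_on_add:
  assumes "bounded_lipschitz_on K f" "bounded_lipschitz_on K g"
  shows "bounded_lipschitz_on K (\<lambda>X. f X + g X)"
proof -
  obtain B1 L1 where
    f: "\<And>X. X \<in> K \<Longrightarrow> norm (f X) \<le> B1"
       "\<And>X Y. X \<in> K \<Longrightarrow> Y \<in> K \<Longrightarrow> norm (f X - f Y) \<le> L1 * l1_dist X Y"
    using assms(1) unfolding bounded_lipschitz_on_def by blast
  obtain B2 L2 where
    g: "\<And>X. X \<in> K \<Longrightarrow> norm (g X) \<le> B2"
       "\<And>X Y. X \<in> K \<Longrightarrow> Y \<in> K \<Longrightarrow> norm (g X - g Y) \<le> L2 * l1_dist X Y"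
    using assms(2) unfolding bounded_lipschitz_on_def by blast
  show ?thesis
  proof (rule bounded_lipschitz_onI)
    show "norm (f X + g X) \<le> B1 + B2" if "X \<in> K" for X
      using f(1) g(1) that norm_triangle_le by (metis add_mono)
    show "norm (f X + g X - (f Y + g Y)) \<le> (L1 + L2) * l1_dist X Y" if "X \<in> K" "Y \<in> K" for X Y
    proof -
      have "norm (f X + g X - (f Y + g Y)) \<le> norm (f X - f Y) + norm (g X - g Y)"
        by (metis add_diff_add norm_triangle_ineq)
      also have "\<dots> \<le> (L1 + L2) * l1_dist X Y"
        using f(2) g(2) that by (simp add: distrib_right add_mono)
      finally show ?thesis .
    qed
  qed
qed

lemma bounded_lipschitz_on_sum:
  assumes "finite A" "\<And>a. a \<in> A \<Longrightarrow> bounded_lipschitz_on K (f a)"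
  shows "bounded_lipschitz_on K (\<lambda>X. \<Sum>a\<in>A. f a X)"
  using assms
  by (induction A rule: finite_induct) (auto intro: bounded_lipschitz_on_add bounded_lipschitz_on_const)

lemma bounded_lipschitz_on_linear:
  assumes "bounded_linear h" "bounded_lipschitz_on K f"
  shows "bounded_lipschitz_on K (\<lambda>X. h (f X))"
proof -
  obtain B L where
    f: "\<And>X. X \<in> K \<Longrightarrow> norm (f X) \<le> B"
       "\<And>X Y. X \<in> K \<Longrightarrow> Y \<in> K \<Longrightarrow> norm (f X - f Y) \<le> L * l1_dist X Y"
    using assms(2) unfolding bounded_lipschitz_on_def by blast
  obtain C where C: "\<And>x. norm (h x) \<le> norm x * C" "C > 0"
    using bounded_linear.pos_bounded[OF assms(1)] by blast
  show ?thesis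
  proof (rule bounded_lipschitz_onI)
    show "norm (h (f X)) \<le> B * C" if "X \<in> K" for X
      using C f(1)[OF that] by (meson order_trans mult_right_mono less_imp_le)
    show "norm (h (f X) - h (f Y)) \<le> (L * C) * l1_dist X Y" if "X \<in> K" "Y \<in> K" for X Y
    proof -
      have "norm (h (f X) - h (f Y)) = norm (h (f X - f Y))"
        by (simp add: linear_simps assms(1))
      also have "\<dots> \<le> norm (f X - f Y) * C" by (rule C)
      also have "\<dots> \<le> (L * l1_dist X Y) * C" using f(2) that C(2) by (simp add: mult_right_mono)
      finally show ?thesis by (simp add: algebra_simps)
    qed
  qed
qed

lemma bounded_lipschitz_on_diff:
  fixes f g :: "('n::finite \<Rightarrow> 'a::real_normed_vector) \<Rightarrow> 'b::real_normed_vector"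
  assumes "bounded_lipschitz_on K f" "bounded_lipschitz_on K g"
  shows "bounded_lipschitz_on K (\<lambda>X. f X - g X)"
  using bounded_lipschitz_on_add[OF assms(1) bounded_lipschitz_on_linear[OF bounded_linear_minus[OF bounded_linear_ident] assms(2)]]
  by simp

lemma bounded_lipschitz_on_bilinear:
  assumes "bounded_bilinear pr" "bounded_lipschitz_on K f" "bounded_lipschitz_on K g"
  shows "bounded_lipschitz_on K (\<lambda>X. pr (f X) (g X))"
proof -
  interpret pr: bounded_bilinear pr by fact
  obtain B1 L1 where
    f: "\<And>X. X \<in> K \<Longrightarrow> norm (f X) \<le> B1"
       "\<And>X Y. X \<in> K \<Longrightarrow> Y \<in> K \<Longrightarrow> norm (f X - f Y) \<le> L1 * l1_dist X Y"
    using assms(2) unfolding bounded_lipschitz_on_def by blast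
  obtain B2 L2 where
    g: "\<And>X. X \<in> K \<Longrightarrow> norm (g X) \<le> B2"
       "\<And>X Y. X \<in> K \<Longrightarrow> Y \<in> K \<Longrightarrow> norm (g X - g Y) \<le> L2 * l1_dist X Y"
    using assms(3) unfolding bounded_lipschitz_on_def by blast
  obtain C where C: "\<And>a b. norm (pr a b) \<le> norm a * norm b * C" "C > 0"
    using pr.pos_bounded by blast
  have B1: "0 \<le> B1" if "X \<in> K" for X
    using f(1)[OF that] by (meson norm_ge_zero order_trans)
  show ?thesis
  proof (rule bounded_lipschitz_onI)
    show "norm (pr (f X) (g X)) \<le> B1 * B2 * C" if X: "X \<in> K" for X
    proof -
      have "norm (pr (f X) (g X)) \<le> norm (f X) * norm (g X) * C" by (rule C)
      also have "\<dots> \<le> B1 * B2 * C"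
        using f(1) g(1) X C(2) B1[OF X] by (intro mult_right_mono mult_mono) auto
      finally show ?thesis .
    qed
    show "norm (pr (f X) (g X) - pr (f Y) (g Y)) \<le> (B1 * L2 * C + L1 * B2 * C) * l1_dist X Y"
      if X: "X \<in> K" and Y: "Y \<in> K" for X Y
    proof -
      have L1: "0 \<le> L1 * l1_dist X Y" using f(2)[OF X Y] by (meson norm_ge_zero order_trans)
      have "pr (f X) (g X) - pr (f Y) (g Y) = pr (f X) (g X - g Y) + pr (f X - f Y) (g Y)"
        by (simp add: pr.diff_left pr.diff_right)
      then have "norm (pr (f X) (g X) - pr (f Y) (g Y))
          \<le> norm (pr (f X) (g X - g Y)) + norm (pr (f X - f Y) (g Y))"
        by (simp add: norm_triangle_ineq)
      also have "\<dots> \<le> norm (f X) * norm (g X - g Y) * C + norm (f X - f Y) * norm (g Y) * C"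
        using C by (intro add_mono) auto
      also have "\<dots> \<le> B1 * (L2 * l1_dist X Y) * C + (L1 * l1_dist X Y) * B2 * C"
        using f g X Y C(2) B1[OF X] L1 by (intro add_mono mult_right_mono mult_mono) auto
      finally show ?thesis by (simp add: algebra_simps)
    qed
  qed
qed

lemma abs_exp_diff_le:
  fixes a b B :: real
  assumes "\<bar>a\<bar> \<le> B" "\<bar>b\<bar> \<le> B"
  shows "\<bar>exp a - exp b\<bar> \<le> exp B * \<bar>a - b\<bar>"
proof -
  have *: "exp b - exp a \<le> exp B * (b - a)" if "a \<le> b" "b \<le> B" for a b :: real
  proof -
    have "exp b * (1 + (a - b)) \<le> exp b * exp (a - b)"
      using exp_ge_add_one_self[of "a - b"] by simp
    then have "exp b - exp a \<le> exp b * (b - a)" by (simp add: exp_diff algebra_simps)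
    also have "\<dots> \<le> exp B * (b - a)" using that by (intro mult_right_mono) auto
    finally show ?thesis .
  qed
  show ?thesis
    using *[of a b] *[of b a] assms by (cases "a \<le> b") (auto simp: abs_minus_commute)
qed

lemma bounded_lipschitz_on_exp:
  fixes f :: "('n::finite \<Rightarrow> 'a::real_normed_vector) \<Rightarrow> real"
  assumes "bounded_lipschitz_on K f"
  shows "bounded_lipschitz_on K (\<lambda>X. exp (f X))"
proof -
  obtain B L where
    f: "\<And>X. X \<in> K \<Longrightarrow> norm (f X) \<le> B"
       "\<And>X Y. X \<in> K \<Longrightarrow> Y \<in> K \<Longrightarrow> norm (f X - f Y) \<le> L * l1_dist X Y"
    using assms unfolding bounded_lipschitz_on_def by blast
  show ?thesis
  proof (rule bounded_lipschitz_onI)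
    show "norm (exp (f X)) \<le> exp B" if "X \<in> K" for X
      using f(1)[OF that] by (simp add: abs_le_iff)
    show "norm (exp (f X) - exp (f Y)) \<le> (exp B * L) * l1_dist X Y" if "X \<in> K" "Y \<in> K" for X Y
    proof -
      have "\<bar>exp (f X) - exp (f Y)\<bar> \<le> exp B * \<bar>f X - f Y\<bar>"
        using f(1) that by (intro abs_exp_diff_le) auto
      also have "\<dots> \<le> exp B * (L * l1_dist X Y)" using f(2) that by (intro mult_left_mono) auto
      finally show ?thesis by simp
    qed
  qed
qed

lemma bounded_lipschitz_on_inverse:
  fixes f :: "('n::finite \<Rightarrow> 'a::real_normed_vector) \<Rightarrow> real"
  assumes "bounded_lipschitz_on K f" "c > 0" "\<And>X. X \<in> K \<Longrightarrow> f X \<ge> c"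
  shows "bounded_lipschitz_on K (\<lambda>X. 1 / f X)"
proof -
  obtain L where
    L: "\<And>X Y. X \<in> K \<Longrightarrow> Y \<in> K \<Longrightarrow> norm (f X - f Y) \<le> L * l1_dist X Y"
    using assms(1) unfolding bounded_lipschitz_on_def by blast
  show ?thesis
  proof (rule bounded_lipschitz_onI)
    show "norm (1 / f X) \<le> 1 / c" if "X \<in> K" for X
      using assms(2) assms(3)[OF that] by (simp add: frac_le)
    show "norm (1 / f X - 1 / f Y) \<le> (L / (c * c)) * l1_dist X Y" if "X \<in> K" "Y \<in> K" for X Y
    proof -
      have fX: "f X \<ge> c" and fY: "f Y \<ge> c" using assms(3) that by auto
      have "\<bar>1 / f X - 1 / f Y\<bar> = \<bar>f X - f Y\<bar> / (f X * f Y)"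
        using fX fY assms(2) by (simp add: field_simps abs_minus_commute)
      also have "\<dots> \<le> \<bar>f X - f Y\<bar> / (c * c)"
        using fX fY assms(2) by (intro divide_left_mono mult_mono) auto
      also have "\<dots> \<le> (L * l1_dist X Y) / (c * c)"
        using L that by (intro divide_right_mono) auto
      finally show ?thesis by simp
    qed
  qed
qed

lemma l1_lipschitz_of_bounded_lipschitz_components:
  fixes F :: "('n::finite \<Rightarrow> 'a::real_normed_vector) \<Rightarrow> 'm::finite \<Rightarrow> 'b::real_normed_vector"
  assumes "\<And>i. bounded_lipschitz_on K (\<lambda>X. F X i)"
  obtains L where "\<And>X Y. X \<in> K \<Longrightarrow> Y \<in> K \<Longrightarrow> l1_dist (F X) (F Y) \<le> L * l1_dist X Y"
proof -
  obtain L :: "'m \<Rightarrow> real" where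
    L: "\<And>i X Y. X \<in> K \<Longrightarrow> Y \<in> K \<Longrightarrow> norm (F X i - F Y i) \<le> L i * l1_dist X Y"
    using assms unfolding bounded_lipschitz_on_def by metis
  have "l1_dist (F X) (F Y) \<le> (\<Sum>i\<in>UNIV. L i) * l1_dist X Y" if "X \<in> K" "Y \<in> K" for X Y
    unfolding l1_dist_def[of "F X"] sum_distrib_right using L[OF that] by (intro sum_mono)
  then show ?thesis using that by blast
qed

section \<open>Uniqueness of solutions\<close>

lemma nonneg_deriv_le_mult_imp_zero:
  fixes g :: "real \<Rightarrow> real"
  assumes dg: "\<And>t. t \<ge> 0 \<Longrightarrow> (g has_real_derivative g' t) (at t within {0..})"
    and g'_le: "\<And>t. t \<ge> 0 \<Longrightarrow> g' t \<le> c * g t"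
    and g0: "g 0 = 0" and g_nonneg: "\<And>t. t \<ge> 0 \<Longrightarrow> g t \<ge> 0"
    and t: "t \<ge> 0"
  shows "g t = 0"
proof -
  define h where "h t = exp (- c * t) * g t" for t
  have dh: "(h has_real_derivative exp (- c * t) * (g' t - c * g t)) (at t within {0..})"
    if "t \<ge> 0" for t
    unfolding h_def
    by (rule derivative_eq_intros dg[OF that] refl | simp)+ (simp add: algebra_simps)
  have "continuous_on {0..} h"
    unfolding continuous_on_eq_continuous_within using dh DERIV_continuous by fastforce
  then have cont: "continuous_on {0..t} h" by (rule continuous_on_subset) auto
  have "h t \<le> h 0"
  proof (rule DERIV_nonpos_imp_decreasing_open[OF t _ cont])
    fix z assume z: "0 < z" "z < t"
    have "(h has_real_derivative exp (- c * z) * (g' z - c * g z)) (at z within {0<..})"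
      by (rule DERIV_subset[OF dh]) (use z in auto)
    then have "(h has_real_derivative exp (- c * z) * (g' z - c * g z)) (at z)"
      using at_within_open[of z "{0<..}"] z by simp
    moreover have "exp (- c * z) * (g' z - c * g z) \<le> 0"
      using g'_le[of z] z by (intro mult_nonneg_nonpos) auto
    ultimately show "\<exists>y. (h has_real_derivative y) (at z) \<and> y \<le> 0" by blast
  qed
  then have "g t \<le> 0" using g0 by (simp add: h_def mult_le_0_iff)
  with g_nonneg[OF t] show ?thesis by simp
qed

lemma norm_le_sqrt_sum_inner_self:
  fixes a :: "'n::finite \<Rightarrow> 'a::real_inner"
  shows "norm (a i) \<le> sqrt (\<Sum>j\<in>UNIV. a j \<bullet> a j)"
proof (rule real_le_rsqrt)
  have "(norm (a i))\<^sup>2 = a i \<bullet> a i" by (simp add: power2_norm_eq_inner)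
  also have "\<dots> \<le> (\<Sum>j\<in>UNIV. a j \<bullet> a j)" by (rule member_le_sum) auto
  finally show "(norm (a i))\<^sup>2 \<le> (\<Sum>j\<in>UNIV. a j \<bullet> a j)" .
qed

lemma sum_inner_le_sqrt_mult_sum_norm:
  fixes a b :: "'n::finite \<Rightarrow> 'a::real_inner"
  shows "(\<Sum>i\<in>UNIV. a i \<bullet> b i) \<le> sqrt (\<Sum>j\<in>UNIV. a j \<bullet> a j) * (\<Sum>i\<in>UNIV. norm (b i))"
  unfolding sum_distrib_left
proof (rule sum_mono)
  fix i
  have "a i \<bullet> b i \<le> norm (a i) * norm (b i)" by (rule norm_cauchy_schwarz)
  also have "\<dots> \<le> sqrt (\<Sum>j\<in>UNIV. a j \<bullet> a j) * norm (b i)"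
    by (intro mult_right_mono norm_le_sqrt_sum_inner_self) simp
  finally show "a i \<bullet> b i \<le> sqrt (\<Sum>j\<in>UNIV. a j \<bullet> a j) * norm (b i)" .
qed

lemma l1_lipschitz_ode_unique:
  fixes X Y :: "real \<Rightarrow> 'n::finite \<Rightarrow> 'a::real_inner"
  assumes lip: "\<And>A B. A \<in> K \<Longrightarrow> B \<in> K \<Longrightarrow> l1_dist (F A) (F B) \<le> L * l1_dist A B"
    and XK: "\<And>t. t \<ge> 0 \<Longrightarrow> X t \<in> K" and YK: "\<And>t. t \<ge> 0 \<Longrightarrow> Y t \<in> K"
    and dX: "\<And>t i. t \<ge> 0 \<Longrightarrow> ((\<lambda>\<tau>. X \<tau> i) has_vector_derivative F (X t) i) (at t within {0..})"
    and dY: "\<And>t i. t \<ge> 0 \<Longrightarrow> ((\<lambda>\<tau>. Y \<tau> i) has_vector_derivative F (Y t) i) (at t within {0..})"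
    and init: "X 0 = Y 0" and t: "t \<ge> 0"
  shows "X t = Y t"
proof -
  define a where "a t i = X t i - Y t i" for t i
  define b where "b t i = F (X t) i - F (Y t) i" for t i
  define D where "D t = (\<Sum>i\<in>UNIV. a t i \<bullet> a t i)" for t
  define n where "n = real CARD('n)"
  have D_nonneg: "D t \<ge> 0" for t unfolding D_def by (simp add: sum_nonneg)
  have dD: "(D has_real_derivative 2 * (\<Sum>i\<in>UNIV. a t i \<bullet> b t i)) (at t within {0..})"
    if "t \<ge> 0" for t
    unfolding D_def sum_distrib_left
  proof (rule DERIV_sum)
    fix i
    have "((\<lambda>\<tau>. a \<tau> i) has_vector_derivative b t i) (at t within {0..})"
      unfolding a_def b_def by (rule has_vector_derivative_diff[OF dX[OF that] dY[OF that]])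
    from bounded_bilinear.has_vector_derivative[OF bounded_bilinear_inner this this]
    show "((\<lambda>\<tau>. a \<tau> i \<bullet> a \<tau> i) has_real_derivative 2 * (a t i \<bullet> b t i)) (at t within {0..})"
      by (simp add: has_real_derivative_iff_has_vector_derivative inner_commute)
  qed
  have D'_le: "2 * (\<Sum>i\<in>UNIV. a t i \<bullet> b t i) \<le> (2 * \<bar>L\<bar> * n) * D t" if "t \<ge> 0" for t
  proof -
    have "l1_dist (X t) (Y t) \<le> n * sqrt (D t)"
      using sum_mono[of UNIV "\<lambda>i. norm (a t i)" "\<lambda>i. sqrt (D t)"] norm_le_sqrt_sum_inner_self[of "a t"]
      by (simp add: l1_dist_def a_def D_def n_def)
    then have F_dist: "l1_dist (F (X t)) (F (Y t)) \<le> \<bar>L\<bar> * (n * sqrt (D t))"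
      using lip[OF XK[OF that] YK[OF that]] l1_dist_nonneg[of "X t" "Y t"]
      by (smt (verit) abs_ge_self abs_ge_zero mult_mono)
    have "2 * (\<Sum>i\<in>UNIV. a t i \<bullet> b t i) \<le> 2 * (sqrt (D t) * l1_dist (F (X t)) (F (Y t)))"
      using sum_inner_le_sqrt_mult_sum_norm[of "a t" "b t"] by (simp add: D_def b_def l1_dist_def)
    also have "\<dots> \<le> 2 * (sqrt (D t) * (\<bar>L\<bar> * (n * sqrt (D t))))"
      using F_dist by (simp add: mult_left_mono D_nonneg)
    also have "\<dots> = (2 * \<bar>L\<bar> * n) * D t"
      using D_nonneg[of t] by (simp add: algebra_simps flip: power2_eq_square)
    finally show ?thesis .
  qed
  have "D 0 = 0" unfolding D_def a_def using init by simp
  from dD D'_le this D_nonneg t have "D t = 0" by (rule nonneg_deriv_le_mult_imp_zero)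
  then show ?thesis
    unfolding D_def a_def by (subst (asm) sum_nonneg_eq_0_iff) (auto simp: fun_eq_iff)
qed

lemma attnField_bounded_lipschitz:
  fixes V :: "real^'d^'d" and K :: "('n::finite \<Rightarrow> real^'d) set"
  assumes K: "\<And>X j. X \<in> K \<Longrightarrow> norm (X j) \<le> R"
  shows "bounded_lipschitz_on K (\<lambda>X. attnField \<beta> V X i)"
proof -
  have X: "bounded_lipschitz_on K (\<lambda>X. X j)" for j
    using K by (rule bounded_lipschitz_on_component)
  have VX: "bounded_lipschitz_on K (\<lambda>X. V *v X j)" for j
    by (rule bounded_lipschitz_on_linear[OF _ X]) simp
  have A: "bounded_lipschitz_on K (\<lambda>X. \<beta> * (X i \<bullet> (V *v X j)))" for j
    by (rule bounded_lipschitz_on_bilinear[OF bounded_bilinear_mult bounded_lipschitz_on_const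
          bounded_lipschitz_on_bilinear[OF bounded_bilinear_inner X VX]])
  have W: "bounded_lipschitz_on K (\<lambda>X. exp (\<beta> * (X i \<bullet> (V *v X j))))" for j
    using A by (rule bounded_lipschitz_on_exp)
  obtain B where B: "\<And>X. X \<in> K \<Longrightarrow> norm (\<beta> * (X i \<bullet> (V *v X i))) \<le> B"
    using A[of i] unfolding bounded_lipschitz_on_def by blast
  have Z_ge: "attnZ \<beta> V X i \<ge> exp (- B)" if "X \<in> K" for X
  proof -
    have "exp (- B) \<le> exp (\<beta> * (X i \<bullet> (V *v X i)))" using B[OF that] by simp
    also have "\<dots> \<le> attnZ \<beta> V X i" unfolding attnZ_def by (rule member_le_sum) auto
    finally show ?thesis .
  qed
  have Z: "bounded_lipschitz_on K (\<lambda>X. attnZ \<beta> V X i)"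
    unfolding attnZ_def by (rule bounded_lipschitz_on_sum) (auto intro: W)
  have S: "bounded_lipschitz_on K (\<lambda>X. \<Sum>j\<in>UNIV. exp (\<beta> * (X i \<bullet> (V *v X j))) *\<^sub>R (V *v X j))"
    by (rule bounded_lipschitz_on_sum) (auto intro: bounded_lipschitz_on_bilinear[OF bounded_bilinear_scaleR W VX])
  have v: "bounded_lipschitz_on K (\<lambda>X. (1 / attnZ \<beta> V X i) *\<^sub>R
      (\<Sum>j\<in>UNIV. exp (\<beta> * (X i \<bullet> (V *v X j))) *\<^sub>R (V *v X j)))"
    by (rule bounded_lipschitz_on_bilinear[OF bounded_bilinear_scaleR
          bounded_lipschitz_on_inverse[OF Z exp_gt_zero Z_ge] S])
  show ?thesis
    unfolding attnField_def Pperp_def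
    by (rule bounded_lipschitz_on_diff[OF v bounded_lipschitz_on_bilinear[OF bounded_bilinear_scaleR
          bounded_lipschitz_on_bilinear[OF bounded_bilinear_inner X v] X]])
qed

definition attn_sphere_solution :: "real \<Rightarrow> real^'d^'d \<Rightarrow> (real \<Rightarrow> 'n::finite \<Rightarrow> real^'d) \<Rightarrow> bool" where
  "attn_sphere_solution \<beta> V x \<longleftrightarrow>
     (\<forall>t\<ge>0. \<forall>i. norm (x t i) = 1 \<and>
        ((\<lambda>\<tau>. x \<tau> i) has_vector_derivative attnField \<beta> V (x t) i) (at t within {0..}))"

lemma attn_sphere_solution_unique:
  fixes X Y :: "real \<Rightarrow> 'n::finite \<Rightarrow> real^'d"
  assumes "attn_sphere_solution \<beta> V X" "attn_sphere_solution \<beta> V Y" "X 0 = Y 0" "t \<ge> 0"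
  shows "X t = Y t"
proof -
  define K where "K = {X :: 'n \<Rightarrow> real^'d. \<forall>j. norm (X j) = 1}"
  obtain L where lip: "\<And>A B. A \<in> K \<Longrightarrow> B \<in> K \<Longrightarrow>
      l1_dist (attnField \<beta> V A) (attnField \<beta> V B) \<le> L * l1_dist A B"
    using l1_lipschitz_of_bounded_lipschitz_components[of K "attnField \<beta> V"]
      attnField_bounded_lipschitz[of K 1 \<beta> V] by (auto simp: K_def)
  have XK: "X t \<in> K" and YK: "Y t \<in> K" if "t \<ge> 0" for t
    using assms(1,2) that by (auto simp: K_def attn_sphere_solution_def)
  have dX: "((\<lambda>\<tau>. X \<tau> i) has_vector_derivative attnField \<beta> V (X t) i) (at t within {0..})"
    and dY: "((\<lambda>\<tau>. Y \<tau> i) has_vector_derivative attnField \<beta> V (Y t) i) (at t within {0..})"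
    if "t \<ge> 0" for t i
    using assms(1,2) that by (auto simp: attn_sphere_solution_def)
  show ?thesis
    using lip XK YK dX dY assms(3,4) by (rule l1_lipschitz_ode_unique)
qed

section \<open>Symmetries and the invariance of the bipolar manifold\<close>

lemma attnField_relabel_sign:
  fixes X :: "'n::finite \<Rightarrow> real^'d" and V :: "real^'d^'d"
  assumes c: "c * c = 1" and \<rho>: "bij \<rho>"
  shows "attnField \<beta> V (\<lambda>j. c *\<^sub>R X (\<rho> j)) i = c *\<^sub>R attnField \<beta> V X (\<rho> i)"
proof -
  have inner_c: "(c *\<^sub>R a) \<bullet> (V *v (c *\<^sub>R b)) = a \<bullet> (V *v b)" for a b :: "real^'d"
    by (simp add: matrix_vector_mult_scaleR c mult.assoc[symmetric])
  have Z: "attnZ \<beta> V (\<lambda>j. c *\<^sub>R X (\<rho> j)) i = attnZ \<beta> V X (\<rho> i)"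
    unfolding attnZ_def inner_c
    using sum.reindex_bij_betw[OF \<rho>, of "\<lambda>k. exp (\<beta> * (X (\<rho> i) \<bullet> (V *v X k)))"] by simp
  have "(\<Sum>j\<in>UNIV. exp (\<beta> * ((c *\<^sub>R X (\<rho> i)) \<bullet> (V *v (c *\<^sub>R X (\<rho> j))))) *\<^sub>R (V *v (c *\<^sub>R X (\<rho> j))))
      = c *\<^sub>R (\<Sum>j\<in>UNIV. exp (\<beta> * (X (\<rho> i) \<bullet> (V *v X (\<rho> j)))) *\<^sub>R (V *v X (\<rho> j)))"
    unfolding inner_c by (simp add: matrix_vector_mult_scaleR scaleR_sum_right mult.commute)
  also have "(\<Sum>j\<in>UNIV. exp (\<beta> * (X (\<rho> i) \<bullet> (V *v X (\<rho> j)))) *\<^sub>R (V *v X (\<rho> j)))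
      = (\<Sum>j\<in>UNIV. exp (\<beta> * (X (\<rho> i) \<bullet> (V *v X j))) *\<^sub>R (V *v X j))"
    using sum.reindex_bij_betw[OF \<rho>, of "\<lambda>j. exp (\<beta> * (X (\<rho> i) \<bullet> (V *v X j))) *\<^sub>R (V *v X j)"]
    by simp
  finally show ?thesis
    unfolding attnField_def Z Pperp_def by (simp add: algebra_simps c mult.assoc[symmetric])
qed

lemma attn_sphere_solution_relabel_sign:
  assumes x: "attn_sphere_solution \<beta> V x" and c: "c * c = 1" and \<rho>: "bij \<rho>"
  shows "attn_sphere_solution \<beta> V (\<lambda>t j. c *\<^sub>R x t (\<rho> j))"
proof -
  have "(\<bar>c\<bar> - 1) * (\<bar>c\<bar> + 1) = 0"
    using c by (simp add: algebra_simps abs_mult_self_eq)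
  then have "\<bar>c\<bar> = 1" by auto
  show ?thesis
    unfolding attn_sphere_solution_def
  proof (intro allI impI conjI)
    fix t :: real and i assume t: "t \<ge> 0"
    show "norm (c *\<^sub>R x t (\<rho> i)) = 1"
      using x t \<open>\<bar>c\<bar> = 1\<close> by (simp add: attn_sphere_solution_def)
    have "((\<lambda>\<tau>. x \<tau> (\<rho> i)) has_vector_derivative attnField \<beta> V (x t) (\<rho> i)) (at t within {0..})"
      using x t by (simp add: attn_sphere_solution_def)
    then show "((\<lambda>\<tau>. c *\<^sub>R x \<tau> (\<rho> i)) has_vector_derivative
        attnField \<beta> V (\<lambda>j. c *\<^sub>R x t (\<rho> j)) i) (at t within {0..})"
      unfolding attnField_relabel_sign[OF c \<rho>]
      by (rule bounded_linear.has_vector_derivative[OF bounded_linear_scaleR_right])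
  qed
qed

lemma attn_sphere_solution_keeps_symmetry:
  assumes x: "attn_sphere_solution \<beta> V x" and c: "c * c = 1" and \<rho>: "bij \<rho>"
    and init: "\<And>j. x 0 j = c *\<^sub>R x 0 (\<rho> j)" and t: "t \<ge> 0"
  shows "x t i = c *\<^sub>R x t (\<rho> i)"
proof -
  have "x 0 = (\<lambda>j. c *\<^sub>R x 0 (\<rho> j))" using init by (rule ext)
  from attn_sphere_solution_unique[OF x attn_sphere_solution_relabel_sign[OF x c \<rho>] this t]
  show ?thesis by (rule fun_cong)
qed

lemma balanced_signs_positiveE:
  fixes s :: "'n::finite \<Rightarrow> real"
  assumes signs: "\<And>i. s i \<in> {-1, 1}" and balanced: "card {i. s i = 1} = card {i. s i = -1}"
  obtains q where "s q = 1"
proof -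
  have "card {i. s i = 1} > 0"
  proof (cases "s undefined = 1")
    case True
    then show ?thesis by (auto simp: card_gt_0_iff)
  next
    case False
    then have "s undefined = -1" using signs[of undefined] by auto
    then show ?thesis unfolding balanced by (auto simp: card_gt_0_iff)
  qed
  then show ?thesis using that by (auto simp: card_gt_0_iff)
qed

lemma balanced_signs_flipE:
  fixes s :: "'n::finite \<Rightarrow> real"
  assumes signs: "\<And>i. s i \<in> {-1, 1}" and balanced: "card {i. s i = 1} = card {i. s i = -1}"
  obtains \<rho> where "bij \<rho>" "\<And>i. s (\<rho> i) = - s i"
proof -
  define P where "P = {i. s i = 1}"
  define N where "N = {i. s i = -1}"
  obtain h where h: "bij_betw h P N"
    using balanced finite_same_card_bij[of P N] by (auto simp: P_def N_def)
  define \<rho> where "\<rho> i = (if i \<in> P then h i else inv_into P h i)" for i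
  have "bij_betw \<rho> (P \<union> N) (N \<union> P)"
    unfolding \<rho>_def
    by (rule bij_betw_disjoint_Un[OF h bij_betw_inv_into[OF h]]) (auto simp: P_def N_def)
  moreover have "P \<union> N = UNIV" using signs by (auto simp: P_def N_def)
  ultimately have "bij \<rho>" by (simp add: Un_commute)
  moreover have "s (\<rho> i) = - s i" for i
  proof (cases "i \<in> P")
    case True
    then show ?thesis using h by (auto simp: \<rho>_def P_def N_def bij_betw_def)
  next
    case False
    then have "i \<in> N" using signs by (auto simp: P_def N_def)
    then have "inv_into P h i \<in> P" using h by (metis bij_betw_def inv_into_into)
    then show ?thesis using \<open>i \<in> N\<close> False by (simp add: \<rho>_def P_def N_def)
  qed
  ultimately show ?thesis by (rule that)
qed

lemma attn_sphere_solution_balanced_bipolar: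
  fixes x :: "real \<Rightarrow> 'n::finite \<Rightarrow> real^'d" and s :: "'n \<Rightarrow> real"
  assumes x: "attn_sphere_solution \<beta> V x"
    and signs: "\<And>i. s i \<in> {-1, 1}" and balanced: "card {i. s i = 1} = card {i. s i = -1}"
    and init: "\<And>i. x 0 i = s i *\<^sub>R u0" and q: "s q = 1" and t: "t \<ge> 0"
  shows "x t i = s i *\<^sub>R x t q"
proof -
  have same_sign: "x t j = x t q" if "s j = 1" for j
  proof -
    define \<sigma> where "\<sigma> k = (if k = j then q else if k = q then j else k)" for k
    have "bij \<sigma>" by (rule involuntory_imp_bij) (simp add: \<sigma>_def)
    moreover have "x 0 k = 1 *\<^sub>R x 0 (\<sigma> k)" for k
      using that q by (simp add: init \<sigma>_def)
    ultimately have "x t j = 1 *\<^sub>R x t (\<sigma> j)"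
      by (rule attn_sphere_solution_keeps_symmetry[OF x _ _ _ t, rotated]) simp
    then show ?thesis by (simp add: \<sigma>_def)
  qed
  obtain \<rho> where \<rho>: "bij \<rho>" "\<And>i. s (\<rho> i) = - s i"
    using balanced_signs_flipE[OF signs balanced] by blast
  have "x 0 k = (-1) *\<^sub>R x 0 (\<rho> k)" for k
    using \<rho>(2) by (simp add: init)
  then have flip: "x t i = (-1) *\<^sub>R x t (\<rho> i)"
    by (rule attn_sphere_solution_keeps_symmetry[OF x _ \<rho>(1) _ t, rotated]) simp
  show ?thesis
  proof (cases "s i = 1")
    case True
    then show ?thesis by (simp add: same_sign)
  next
    case False
    then have "s i = -1" "s (\<rho> i) = 1" using signs[of i] \<rho>(2)[of i] by auto
    then show ?thesis using flip same_sign by simp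
  qed
qed

section \<open>The field on a balanced bipolar configuration\<close>

lemma sum_over_signs:
  fixes s :: "'n::finite \<Rightarrow> real" and f :: "real \<Rightarrow> 'a::real_vector"
  assumes "\<And>i. s i \<in> {-1, 1}"
  shows "(\<Sum>k\<in>UNIV. f (s k)) = real (card {i. s i = 1}) *\<^sub>R f 1 + real (card {i. s i = -1}) *\<^sub>R f (-1)"
proof -
  have U: "UNIV = {i. s i = 1} \<union> {i. s i = -1}" using assms by auto
  have "(\<Sum>k\<in>UNIV. f (s k)) = (\<Sum>k\<in>{i. s i = 1}. f (s k)) + (\<Sum>k\<in>{i. s i = -1}. f (s k))"
    by (subst U, rule sum.union_disjoint) auto
  also have "\<dots> = (\<Sum>k\<in>{i. s i = 1}. f 1) + (\<Sum>k\<in>{i. s i = -1}. f (-1))"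
    by (intro arg_cong2[where f = "(+)"] sum.cong) auto
  finally show ?thesis by (simp add: sum_constant_scaleR)
qed

lemma attnField_balanced_bipolar:
  fixes s :: "'n::finite \<Rightarrow> real" and V :: "real^'d^'d" and u :: "real^'d"
  assumes signs: "\<And>i. s i \<in> {-1, 1}" and balanced: "card {i. s i = 1} = card {i. s i = -1}"
    and q: "s q = 1"
  defines "M \<equiv> u \<bullet> (V *v u)"
  shows "attnField \<beta> V (\<lambda>j. s j *\<^sub>R u) q = tanh (\<beta> * M) *\<^sub>R (V *v u - M *\<^sub>R u)"
proof -
  define m where "m = real (card {i. s i = 1})"
  have "m > 0" using q by (auto simp: m_def card_gt_0_iff)
  have inner_s: "(s q *\<^sub>R u) \<bullet> (V *v (s j *\<^sub>R u)) = s j * M" for j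
    using q by (simp add: matrix_vector_mult_scaleR M_def)
  have Z: "attnZ \<beta> V (\<lambda>j. s j *\<^sub>R u) q = m * (exp (\<beta> * M) + exp (- (\<beta> * M)))"
    unfolding attnZ_def inner_s
    using sum_over_signs[of s, OF signs, of "\<lambda>a. exp (\<beta> * (a * M))"] balanced
    by (simp add: m_def algebra_simps)
  have S: "(\<Sum>j\<in>UNIV. exp (\<beta> * ((s q *\<^sub>R u) \<bullet> (V *v (s j *\<^sub>R u)))) *\<^sub>R (V *v (s j *\<^sub>R u)))
      = (m * (exp (\<beta> * M) - exp (- (\<beta> * M)))) *\<^sub>R (V *v u)"
    unfolding inner_s unfolding matrix_vector_mult_scaleR
    using sum_over_signs[of s, OF signs, of "\<lambda>a. exp (\<beta> * (a * M)) *\<^sub>R (a *\<^sub>R (V *v u))"] balanced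
    by (simp add: m_def algebra_simps)
  have "(1 / (m * (exp (\<beta> * M) + exp (- (\<beta> * M))))) * (m * (exp (\<beta> * M) - exp (- (\<beta> * M))))
      = tanh (\<beta> * M)"
    using \<open>m > 0\<close> by (simp add: tanh_altdef)
  then show ?thesis
    unfolding attnField_def Z S scaleR_scaleR Pperp_def using q
    by (simp add: M_def algebra_simps)
qed

lemma orthonormal_family_expansion:
  fixes e :: "'d::finite \<Rightarrow> real^'d"
  assumes e: "\<And>k l. e k \<bullet> e l = (if k = l then 1 else 0)"
  shows "(\<Sum>l\<in>UNIV. (u \<bullet> e l) *\<^sub>R e l) = u"
proof -
  have "inj e"
  proof (rule injI)
    fix k l assume "e k = e l"
    then have "e k \<bullet> e l = 1" using e[of l l] by simp
    then show "k = l" using e[of k l] by (auto split: if_splits)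
  qed
  have orth: "pairwise orthogonal (range e)"
    unfolding pairwise_def orthogonal_def using e by auto
  have unit: "norm v = 1" if "v \<in> range e" for v
    using e that by (auto simp: norm_eq_1)
  have "0 \<notin> range e" using unit by fastforce
  with orth have "independent (range e)" by (rule pairwise_orthogonal_independent)
  moreover have "card (range e) = dim (UNIV :: (real^'d) set)"
    using card_image[OF \<open>inj e\<close>] by simp
  ultimately have "UNIV \<subseteq> span (range e)"
    using card_eq_dim[of "range e" UNIV] by simp
  then have "(\<Sum>v\<in>range e. (u \<bullet> v) *\<^sub>R v) = u"
    by (intro orthonormal_basis_expand[OF orth unit]) auto
  then show ?thesis by (simp add: sum.reindex[OF \<open>inj e\<close>])
qed

lemma symmetric_matrix_inner:
  fixes V :: "real^'d^'d"
  assumes "transpose V = V"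
  shows "(V *v u) \<bullet> w = u \<bullet> (V *v w)"
  using transpose_matrix_vector[of V u] assms by (simp add: dot_lmul_matrix)

lemma symmetric_matrix_eigen_coordinate:
  fixes V :: "real^'d^'d"
  assumes "transpose V = V" and "V *v e = lam *\<^sub>R e"
  shows "(V *v u) \<bullet> e = lam * (u \<bullet> e)"
  using assms by (simp add: symmetric_matrix_inner)

lemma quadratic_form_eigenbasis:
  fixes V :: "real^'d^'d" and e :: "'d::finite \<Rightarrow> real^'d"
  assumes V_sym: "transpose V = V"
    and e_orthonormal: "\<And>k l. e k \<bullet> e l = (if k = l then 1 else 0)"
    and e_eigen: "\<And>k. V *v e k = lam k *\<^sub>R e k"
  shows "u \<bullet> (V *v u) = (\<Sum>l\<in>UNIV. lam l * (u \<bullet> e l)\<^sup>2)"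
proof -
  have "u \<bullet> (V *v u) = (\<Sum>l\<in>UNIV. (u \<bullet> e l) *\<^sub>R e l) \<bullet> (V *v u)"
    by (simp only: orthonormal_family_expansion[OF e_orthonormal])
  also have "\<dots> = (\<Sum>l\<in>UNIV. (u \<bullet> e l) * ((V *v u) \<bullet> e l))"
    by (simp add: inner_sum_left inner_commute[of "e _" "V *v u"])
  also have "\<dots> = (\<Sum>l\<in>UNIV. lam l * (u \<bullet> e l)\<^sup>2)"
    by (simp add: symmetric_matrix_eigen_coordinate[OF V_sym e_eigen] power2_eq_square mult.left_commute)
  finally show ?thesis .
qed

lemma attnField_balanced_bipolar_eigen_coordinate:
  fixes V :: "real^'d^'d" and e :: "'d::finite \<Rightarrow> real^'d" and s :: "'n::finite \<Rightarrow> real"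
    and u :: "real^'d"
  assumes V_sym: "transpose V = V"
    and e_orthonormal: "\<And>k l. e k \<bullet> e l = (if k = l then 1 else 0)"
    and e_eigen: "\<And>k. V *v e k = lam k *\<^sub>R e k"
    and signs: "\<And>i. s i \<in> {-1, 1}" and balanced: "card {i. s i = 1} = card {i. s i = -1}"
    and q: "s q = 1"
  defines "M \<equiv> \<Sum>l\<in>UNIV. lam l * (u \<bullet> e l)\<^sup>2"
  shows "attnField \<beta> V (\<lambda>j. s j *\<^sub>R u) q \<bullet> e k = (u \<bullet> e k) * tanh (\<beta> * M) * (lam k - M)"
  unfolding attnField_balanced_bipolar[OF signs balanced q]
    quadratic_form_eigenbasis[OF V_sym e_orthonormal e_eigen] M_def[symmetric]
  by (simp add: inner_diff_left symmetric_matrix_eigen_coordinate[OF V_sym e_eigen] algebra_simps)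

theorem proposition4p3:
  fixes \<beta> :: real
    and V :: "real^'d^'d"
    and e :: "'d \<Rightarrow> real^'d"
    and lam :: "'d \<Rightarrow> real"
    and x :: "real \<Rightarrow> 'n::finite \<Rightarrow> real^'d"
    and s :: "'n \<Rightarrow> real"
    and u0 :: "real^'d"
  assumes beta_pos: "\<beta> > 0"
    and V_sym: "transpose V = V"
    and e_orthonormal: "\<And>k l. e k \<bullet> e l = (if k = l then 1 else 0)"
    and e_eigen: "\<And>k. V *v e k = lam k *\<^sub>R e k"
    and s_signs: "\<And>i. s i \<in> {-1, 1}"
    and s_balanced: "card {i. s i = 1} = card {i. s i = -1}"
    and u0_sphere: "norm u0 = 1"
    and x_sphere: "\<And>t i. t \<ge> 0 \<Longrightarrow> norm (x t i) = 1"
    and x_ode: "\<And>t i. t \<ge> 0 \<Longrightarrow>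
        ((\<lambda>\<tau>. x \<tau> i) has_vector_derivative attnField \<beta> V (x t) i) (at t within {0..})"
    and x_init: "\<And>i. x 0 i = s i *\<^sub>R u0"
  shows "\<exists>u :: real \<Rightarrow> real^'d.
           (\<forall>t\<ge>0. norm (u t) = 1 \<and> (\<forall>i. x t i = s i *\<^sub>R u t)) \<and>
           (\<forall>k. \<forall>t\<ge>0.
              ((\<lambda>\<tau>. u \<tau> \<bullet> e k) has_real_derivative
                 (u t \<bullet> e k) * tanh (\<beta> * (\<Sum>l\<in>UNIV. lam l * (u t \<bullet> e l)^2))
                   * (lam k - (\<Sum>l\<in>UNIV. lam l * (u t \<bullet> e l)^2)))
              (at t within {0..}))"
proof -
  have x: "attn_sphere_solution \<beta> V x"
    using x_sphere x_ode unfolding attn_sphere_solution_def by blast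
  obtain q where q: "s q = 1"
    using balanced_signs_positiveE[OF s_signs s_balanced] .
  define u where "u t = x t q" for t
  have bipolar: "x t = (\<lambda>j. s j *\<^sub>R u t)" if "t \<ge> 0" for t
    unfolding u_def by (rule ext, rule attn_sphere_solution_balanced_bipolar[OF x s_signs s_balanced x_init q that])
  show ?thesis
  proof (intro exI[of _ u] conjI allI impI)
    fix t :: real assume t: "t \<ge> 0"
    show "norm (u t) = 1" unfolding u_def by (rule x_sphere[OF t])
    show "x t i = s i *\<^sub>R u t" for i using bipolar[OF t] by simp
  next
    fix k and t :: real assume t: "t \<ge> 0"
    have "((\<lambda>\<tau>. u \<tau> \<bullet> e k) has_vector_derivative attnField \<beta> V (x t) q \<bullet> e k) (at t within {0..})"
      unfolding u_def by (rule bounded_linear.has_vector_derivative[OF bounded_linear_inner_left x_ode[OF t]])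
    then show "((\<lambda>\<tau>. u \<tau> \<bullet> e k) has_real_derivative
        (u t \<bullet> e k) * tanh (\<beta> * (\<Sum>l\<in>UNIV. lam l * (u t \<bullet> e l)^2))
          * (lam k - (\<Sum>l\<in>UNIV. lam l * (u t \<bullet> e l)^2))) (at t within {0..})"
      unfolding has_real_derivative_iff_has_vector_derivative bipolar[OF t]
        attnField_balanced_bipolar_eigen_coordinate[OF V_sym e_orthonormal e_eigen s_signs s_balanced q] .
  qed
qed

end
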